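(* Let $A$ be an $n\times n$ binary matrix with zero diagonal. Then there is a homeomorphism $Q^n_{\mathcal{F}_A}\cong M(\mathcal{C}^n_0,\lambda_A)$ which is equivariant with respect to the action of $H=\langle h_1,\dots,h_n\rangle\cong(\mathbb{Z}_2)^n$ on $Q^n_{\mathcal{F}_A}$ and the natural $(\mathbb{Z}_2)^n$-action on $M(\mathcal{C}^n_0,\lambda_A)$, under the isomorphism $h_i\mapsto e_i$.
   Context: $\mathcal{C}^n=\{x\in\mathbb{R}^n: -\tfrac14\le x_i\le\tfrac14\}$; $\mathbf{F}(i)$, $\mathbf{F}(-i)$ ($1\le i\le n$) are the facets in $\{x_i=\tfrac14\}$, $\{x_i=-\tfrac14\}$. Binary matrices have entries in $\mathbb{Z}_2$; $A^i_k$ denotes the $(i,k)$ entry; $\widetilde A=A+I_n$. $\mathcal{F}_A$ pairs $\mathbf{F}(j)$ with $\mathbf{F}(-j)$ via $\tau^A_j(x)=y$ with $y_{|j|}=-x_{|j|}$ and $y_k=(-1)^{A^{|j|}_k}x_k$ for $k\ne|j|$; $Q^n_{\mathcal{F}_A}$ is the quotient of $\mathcal{C}^n$ by the equivalence relation generated by $x\sim\tau^A_j(x)$, $x\in\mathbf{F}(j)$. For $1\le i\le n$, $h_i:\mathcal{C}^n\to\mathcal{C}^n$ negates the $i$-th coordinate; these commute with the maps $\tau^A_j$ and hence $H=\langle h_1,\dots,h_n\rangle$ acts on $Q^n_{\mathcal{F}_A}$. $\mathcal{C}^n_0=\{x\in\mathbb{R}^n:0\le x_i\le\tfrac14\}$,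 with facets $\overline F_j=\mathcal{C}^n_0\cap\{x_j=0\}$ and $\overline F^*_j=\mathcal{C}^n_0\cap\{x_j=\tfrac14\}$. Let $e_1,\dots,e_n$ be the standard basis of $(\mathbb{Z}_2)^n$; $\lambda_A(\overline F_j)=e_j$ and $\lambda_A(\overline F^*_j)=\sum_k\widetilde A^j_k e_k$ (the $j$-th row of $\widetilde A$). Glue-back construction: for a nice manifold with corners $W$ and a function $\mu$ from its facets to $(\mathbb{Z}_2)^m$, for a face $f$ let $G_f$ be the subgroup generated by $\mu(F)$ over facets $F\supseteq f$ (and $G_W=0$); for $p\in W$ let $f(p)$ be the face containing $p$ in its relative interior. $M(W,\mu)=W\times(\mathbb{Z}_2)^m/\sim$ where $(p,g)\sim(p',g')$ iff $p=p'$ and $g-g'\in G_{f(p)}$. The natural $(\mathbb{Z}_2)^m$-action is $g\cdot[(p,g_0)]=[(p,g_0+g)]$. *)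

theory Defs
  imports "HOL-Analysis.Analysis" "HOL-Library.Z2"
begin

definition quot_top :: "'a topology \<Rightarrow> ('a \<Rightarrow> 'b) \<Rightarrow> 'b topology" where
  "quot_top X q = topology (\<lambda>U. U \<subseteq> q ` topspace X \<and> openin X {x \<in> topspace X. q x \<in> U})"

definition gen_equiv :: "'a set \<Rightarrow> ('a \<times> 'a) set \<Rightarrow> ('a \<times> 'a) set" where
  "gen_equiv C R = Id_on C \<union> (R \<union> R\<inverse>)\<^sup>+"

definition cubeC :: "(real^'n) set" where
  "cubeC = {x. \<forall>i. -(1/4) \<le> x$i \<and> x$i \<le> 1/4}"

text \<open>facetC i True = F(i), facetC i False = F(-i)\<close>
definition facetC :: "'n \<Rightarrow> bool \<Rightarrow> (real^'n) set" where
  "facetC i s = {x \<in> cubeC. x$i = (if s then 1/4 else -(1/4))}"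

definition sgn_bit :: "bit \<Rightarrow> real" where
  "sgn_bit b = (if b = 1 then -1 else 1)"

text \<open>tau^A_j for j = +i or -i (the formula only depends on |j| = i).\<close>
definition tauA :: "bit^'n^'n \<Rightarrow> 'n \<Rightarrow> (real^'n) \<Rightarrow> real^'n" where
  "tauA A i x = (\<chi> k. if k = i then - (x$k) else sgn_bit (A$i$k) * x$k)"

definition glue_rel :: "bit^'n^'n \<Rightarrow> ((real^'n) \<times> (real^'n)) set" where
  "glue_rel A = {(x, tauA A i x) | x i s. x \<in> facetC i s}"

definition Qclass :: "bit^'n^'n \<Rightarrow> (real^'n) \<Rightarrow> (real^'n) set" where
  "Qclass A x = gen_equiv cubeC (glue_rel A) `` {x}"

definition QF :: "bit^'n^'n \<Rightarrow> (real^'n) set topology" where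
  "QF A = quot_top (top_of_set cubeC) (Qclass A)"

text \<open>h_g = product of the h_i with g$i = 1 (negating those coordinates); element g of (Z_2)^n.\<close>
definition hvec :: "bit^'n \<Rightarrow> (real^'n) \<Rightarrow> real^'n" where
  "hvec g x = (\<chi> k. if g$k = 1 then - (x$k) else x$k)"

definition hQ :: "bit^'n \<Rightarrow> (real^'n) set \<Rightarrow> (real^'n) set" where
  "hQ g c = hvec g ` c"

inductive_set gen_subgroup :: "'g::ab_group_add set \<Rightarrow> 'g set" for S where
  gen_zero: "0 \<in> gen_subgroup S"
| gen_base: "g \<in> S \<Longrightarrow> g \<in> gen_subgroup S"
| gen_add: "a \<in> gen_subgroup S \<Longrightarrow> b \<in> gen_subgroup S \<Longrightarrow> a + b \<in> gen_subgroup S"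
| gen_neg: "a \<in> gen_subgroup S \<Longrightarrow> - a \<in> gen_subgroup S"

text \<open>Facets of W are given by an indexing Fc :: 'f \<Rightarrow> 'a set.
  f(p): the face containing p in its relative interior, i.e. the intersection of
  W with all facets containing p (W itself if p lies on no facet).\<close>
definition face_of_pt :: "'a set \<Rightarrow> ('f \<Rightarrow> 'a set) \<Rightarrow> 'a \<Rightarrow> 'a set" where
  "face_of_pt W Fc p = W \<inter> \<Inter>{Fc F | F. p \<in> Fc F}"

definition G_face :: "('f \<Rightarrow> 'a set) \<Rightarrow> ('f \<Rightarrow> 'g::ab_group_add) \<Rightarrow> 'a set \<Rightarrow> 'g set" where
  "G_face Fc mu f = gen_subgroup {mu F | F. f \<subseteq> Fc F}"

definition glue_rel_M :: "'a set \<Rightarrow> ('f \<Rightarrow> 'a set) \<Rightarrow> ('f \<Rightarrow> 'g::ab_group_add)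
    \<Rightarrow> (('a \<times> 'g) \<times> ('a \<times> 'g)) set" where
  "glue_rel_M W Fc mu = {((p, g), (p', g')) | p g p' g'.
      p \<in> W \<and> p = p' \<and> g - g' \<in> G_face Fc mu (face_of_pt W Fc p)}"

definition Mclass :: "'a set \<Rightarrow> ('f \<Rightarrow> 'a set) \<Rightarrow> ('f \<Rightarrow> 'g::ab_group_add)
    \<Rightarrow> 'a \<times> 'g \<Rightarrow> ('a \<times> 'g) set" where
  "Mclass W Fc mu pg = glue_rel_M W Fc mu `` {pg}"

definition glueM :: "'a::topological_space set \<Rightarrow> ('f \<Rightarrow> 'a set) \<Rightarrow> ('f \<Rightarrow> 'g::ab_group_add)
    \<Rightarrow> ('a \<times> 'g) set topology" where
  "glueM W Fc mu = quot_top (prod_topology (top_of_set W) (discrete_topology UNIV)) (Mclass W Fc mu)"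

definition glue_act :: "'g::ab_group_add \<Rightarrow> ('a \<times> 'g) set \<Rightarrow> ('a \<times> 'g) set" where
  "glue_act g c = (\<lambda>(p, g0). (p, g0 + g)) ` c"

definition cube0 :: "(real^'n) set" where
  "cube0 = {x. \<forall>i. 0 \<le> x$i \<and> x$i \<le> 1/4}"

text \<open>facet0 (j, False) = bar F_j (x_j = 0), facet0 (j, True) = bar F^*_j (x_j = 1/4).\<close>
definition facet0 :: "'n \<times> bool \<Rightarrow> (real^'n) set" where
  "facet0 js = {x \<in> cube0. x$(fst js) = (if snd js then 1/4 else 0)}"

definition lambdaA :: "bit^'n^'n \<Rightarrow> 'n \<times> bool \<Rightarrow> bit^'n" where
  "lambdaA A js = (if snd js then (A + mat 1)$(fst js) else axis (fst js) 1)"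

end

theory Submission
  imports Defs
begin

(* Every point of the cube C^n is obtained from a point p of the small cube
   C^n_0 by the sign changes h_g, g in (Z_2)^n; write unfold_pt (p, g) = h_g p.  The map
   unfold_pt : C^n_0 x (Z_2)^n -> C^n is a continuous surjection from a compact space onto a
   Hausdorff space, hence a quotient map.  Consequently both Q^n_{F_A} and M(C^n_0, lambda_A)
   are quotients of C^n_0 x (Z_2)^n, and they are homeomorphic as soon as the two quotient
   maps have the same fibres.  The combinatorial heart of the proof is that, for a zero
   diagonal A, the points h_g p and h_g' p' are identified in Q^n_{F_A} iff p = p' and
   g - g' lies in the group G_{f(p)} generated by the lambda_A-values of the facets through p.
   Equivariance follows because h_g preserves the facet pairing while translation by g
   preserves the glue-back relation. *)

section \<open>Quotient topologies\<close>

lemma istopology_quot_top: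
  "istopology (\<lambda>U. U \<subseteq> q ` topspace X \<and> openin X {x \<in> topspace X. q x \<in> U})"
proof -
  have "{x \<in> topspace X. q x \<in> S \<inter> T} = {x \<in> topspace X. q x \<in> S} \<inter> {x \<in> topspace X. q x \<in> T}"
    "{x \<in> topspace X. q x \<in> \<Union>K} = (\<Union>S\<in>K. {x \<in> topspace X. q x \<in> S})" for S T K
    by auto
  then show ?thesis
    unfolding istopology_def by (auto intro: openin_Int)
qed

lemma openin_quot_top:
  "openin (quot_top X q) U \<longleftrightarrow> U \<subseteq> q ` topspace X \<and> openin X {x \<in> topspace X. q x \<in> U}"
  unfolding quot_top_def topology_inverse'[OF istopology_quot_top] by (rule refl)

lemma topspace_quot_top: "topspace (quot_top X q) = q ` topspace X"
proof -
  have "{x \<in> topspace X. q x \<in> q ` topspace X} = topspace X"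
    by auto
  then have "openin (quot_top X q) (q ` topspace X)"
    unfolding openin_quot_top by auto
  then show ?thesis
    using openin_subset openin_quot_top[of X q "topspace (quot_top X q)"] by blast
qed

lemma quotient_map_quot_top: "quotient_map X (quot_top X q) q"
  unfolding quotient_map_def topspace_quot_top openin_quot_top by auto

lemma quotient_maps_same_fibres:
  assumes q1: "quotient_map X Y1 q1" and q2: "quotient_map X Y2 q2"
    and fib: "\<And>x y. x \<in> topspace X \<Longrightarrow> y \<in> topspace X \<Longrightarrow> q1 x = q1 y \<longleftrightarrow> q2 x = q2 y"
  obtains k where "homeomorphic_map Y1 Y2 k" "\<And>x. x \<in> topspace X \<Longrightarrow> k (q1 x) = q2 x"
proof -
  obtain k where k: "continuous_map Y1 Y2 k" "\<And>x. x \<in> topspace X \<Longrightarrow> k (q1 x) = q2 x"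
    using quotient_map_lift_exists[OF q1 quotient_imp_continuous_map[OF q2]] fib by metis
  have "quotient_map X Y2 (k \<circ> q1)"
    using quotient_map_eq[OF q2] k(2) by (simp add: o_def)
  then have "quotient_map Y1 Y2 k"
    by (rule quotient_map_from_composition[OF quotient_imp_continuous_map[OF q1] k(1)])
  moreover have "inj_on k (topspace Y1)"
  proof (rule inj_onI)
    fix y y' assume "y \<in> topspace Y1" "y' \<in> topspace Y1" "k y = k y'"
    moreover obtain x x' where "x \<in> topspace X" "x' \<in> topspace X" "y = q1 x" "y' = q1 x'"
      using quotient_imp_surjective_map[OF q1] \<open>y \<in> topspace Y1\<close> \<open>y' \<in> topspace Y1\<close> by blast
    ultimately show "y = y'"
      using fib k(2) by simp
  qed
  ultimately show ?thesis
    using that k(2) by (simp add: homeomorphic_map_def)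
qed

lemma continuous_map_vec_lambda:
  assumes "\<And>k. continuous_map X euclideanreal (\<lambda>x. F x k)"
  shows "continuous_map X euclidean (\<lambda>x. (\<chi> k. F x k) :: real^'n)"
  using assms unfolding continuous_map_atin limitin_canonical_iff
  by (blast intro: tendsto_vec_lambda)

section \<open>Generated equivalence relations\<close>

lemma gen_equiv_equiv:
  assumes "R \<subseteq> C \<times> C"
  shows "equiv C (gen_equiv C R)"
proof (rule equivI)
  have "(R \<union> R\<inverse>)\<^sup>+ \<subseteq> C \<times> C"
    by (rule trancl_subset_Sigma) (use assms in auto)
  then show "gen_equiv C R \<subseteq> C \<times> C"
    unfolding gen_equiv_def by auto
  show "refl_on C (gen_equiv C R)"
    unfolding gen_equiv_def refl_on_def by auto
  have "sym ((R \<union> R\<inverse>)\<^sup>+)"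
    by (rule sym_trancl) (auto simp: sym_def)
  then show "sym (gen_equiv C R)"
    unfolding gen_equiv_def sym_def by auto
  show "trans (gen_equiv C R)"
    unfolding gen_equiv_def trans_def by (auto intro: trancl_trans)
qed

lemma gen_equiv_least:
  assumes S: "equiv C S" and R: "R \<subseteq> S"
  shows "gen_equiv C R \<subseteq> S"
proof -
  have "R \<union> R\<inverse> \<subseteq> S"
    using R S by (auto elim: equivE symE)
  then have "(R \<union> R\<inverse>)\<^sup>+ \<subseteq> S\<^sup>+"
    using trancl_mono by blast
  also have "S\<^sup>+ = S"
    using S by (auto elim: equivE)
  finally show ?thesis
    using S unfolding gen_equiv_def by (auto elim: equivE refl_onD)
qed

lemma equiv_pullback:
  assumes "equiv D T" and "f ` C \<subseteq> D"
  shows "equiv C {(x, y). x \<in> C \<and> y \<in> C \<and> (f x, f y) \<in> T}"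
  using assms unfolding equiv_def refl_on_def sym_def trans_def by blast

lemma gen_equiv_map:
  assumes C: "f ` C \<subseteq> C" and R: "\<And>x y. (x, y) \<in> R \<Longrightarrow> (f x, f y) \<in> R"
    and xy: "(x, y) \<in> gen_equiv C R"
  shows "(f x, f y) \<in> gen_equiv C R"
proof -
  have "(f x, f y) \<in> (R \<union> R\<inverse>)\<^sup>+" if "(x, y) \<in> (R \<union> R\<inverse>)\<^sup>+" for x y
    using that
  proof (induction rule: trancl_induct)
    case (base y)
    then show ?case using R by blast
  next
    case (step y z)
    then show ?case using R by (blast intro: trancl_into_trancl)
  qed
  then show ?thesis
    using xy C unfolding gen_equiv_def by blast
qed

lemma image_equiv_class:
  assumes R: "\<And>x y. (x, y) \<in> R \<Longrightarrow> (f x, f y) \<in> R" "\<And>x y. (x, y) \<in> R \<Longrightarrow> (f' x, f' y) \<in> R"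
    and inv: "\<And>x. f' (f x) = x" "\<And>y. f (f' y) = y"
  shows "f ` (R `` {x}) = R `` {f x}"
proof
  show "f ` (R `` {x}) \<subseteq> R `` {f x}"
    using R(1) by blast
  show "R `` {f x} \<subseteq> f ` (R `` {x})"
  proof
    fix z assume "z \<in> R `` {f x}"
    then have "(x, f' z) \<in> R"
      using R(2) inv(1) by fastforce
    then show "z \<in> f ` (R `` {x})"
      using inv(2) by (metis Image_singleton_iff imageI)
  qed
qed

section \<open>The glue-back construction\<close>

lemma gen_subgroup_sum:
  "finite I \<Longrightarrow> (\<And>i. i \<in> I \<Longrightarrow> f i \<in> gen_subgroup S) \<Longrightarrow> sum f I \<in> gen_subgroup S"
  by (induction I rule: finite_induct) (auto intro: gen_zero gen_add)

lemma glue_rel_M_equiv: "equiv (W \<times> UNIV) (glue_rel_M W Fc mu)"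
proof (rule equivI)
  show "glue_rel_M W Fc mu \<subseteq> (W \<times> UNIV) \<times> (W \<times> UNIV)"
    unfolding glue_rel_M_def by auto
  show "refl_on (W \<times> UNIV) (glue_rel_M W Fc mu)"
    unfolding glue_rel_M_def refl_on_def G_face_def by (auto intro: gen_zero)
  show "sym (glue_rel_M W Fc mu)"
    unfolding glue_rel_M_def sym_def G_face_def by (auto dest: gen_neg)
  show "trans (glue_rel_M W Fc mu)"
  proof (rule transI)
    fix x y z assume "(x, y) \<in> glue_rel_M W Fc mu" "(y, z) \<in> glue_rel_M W Fc mu"
    then obtain p g g' g'' where xyz: "x = (p, g)" "y = (p, g')" "z = (p, g'')" "p \<in> W"
      and G: "g - g' \<in> G_face Fc mu (face_of_pt W Fc p)" "g' - g'' \<in> G_face Fc mu (face_of_pt W Fc p)"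
      unfolding glue_rel_M_def by auto
    from G have "(g - g') + (g' - g'') \<in> G_face Fc mu (face_of_pt W Fc p)"
      unfolding G_face_def by (rule gen_add)
    then show "(x, z) \<in> glue_rel_M W Fc mu"
      using xyz unfolding glue_rel_M_def by (simp add: algebra_simps)
  qed
qed

lemma in_face_of_pt: "p \<in> W \<Longrightarrow> p \<in> face_of_pt W Fc p"
  unfolding face_of_pt_def by auto

lemma glue_act_Mclass:
  "glue_act g (Mclass W Fc mu (p, g0)) = Mclass W Fc mu (p, g0 + g)"
proof -
  have shift_add: "((fst x, snd x + h), (fst y, snd y + h)) \<in> glue_rel_M W Fc mu"
    and shift_diff: "((fst x, snd x - h), (fst y, snd y - h)) \<in> glue_rel_M W Fc mu"
    if "(x, y) \<in> glue_rel_M W Fc mu" for x y h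
    using that unfolding glue_rel_M_def by auto
  have "(\<lambda>(p, g0). (p, g0 + g)) ` (glue_rel_M W Fc mu `` {(p, g0)})
      = glue_rel_M W Fc mu `` {(\<lambda>(p, g0). (p, g0 + g)) (p, g0)}"
    by (rule image_equiv_class[where f' = "\<lambda>(p, g0). (p, g0 - g)"])
      (simp_all add: split_beta shift_add shift_diff)
  then show ?thesis
    unfolding glue_act_def Mclass_def by simp
qed

section \<open>Sign changes on the cube\<close>

text \<open>Z_2 has exactly two elements; in particular (Z_2)^n is finite, which makes
  C^n_0 x (Z_2)^n compact.\<close>
lemma bit_0_or_1: "(b::bit) = 0 \<or> b = 1"
  by (cases b) auto

lemma finite_bitvec: "finite (UNIV :: (bit^'n) set)"
proof -
  have "range (\<lambda>v::bool^'n. \<chi> i. if v$i then (1::bit) else 0) = UNIV"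
  proof (intro surjI)
    show "(\<chi> i. if (\<chi> i. w$i = 1)$i then (1::bit) else 0) = w" for w :: "bit^'n"
      by (auto simp: vec_eq_iff bit_0_or_1)
  qed
  then show ?thesis
    by (metis finite finite_imageI)
qed

lemma hvec_comp: "hvec g (hvec h x) = hvec (h + g) x"
  unfolding hvec_def vec_eq_iff by auto

lemma hvec_invol: "hvec g (hvec g x) = x"
  unfolding hvec_def vec_eq_iff by auto

lemma cubeC_iff: "x \<in> cubeC \<longleftrightarrow> (\<forall>k. \<bar>x$k\<bar> \<le> 1/4)"
proof -
  have "(- (1/4) \<le> t \<and> t \<le> 1/4) \<longleftrightarrow> \<bar>t\<bar> \<le> 1/4" for t :: real
    by (auto simp: abs_le_iff)
  then show ?thesis
    unfolding cubeC_def by (simp only: mem_Collect_eq)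
qed

lemma abs_hvec: "\<bar>hvec g x $ k\<bar> = \<bar>x$k\<bar>"
  unfolding hvec_def by simp

lemma hvec_cubeC: "x \<in> cubeC \<Longrightarrow> hvec g x \<in> cubeC"
  by (simp add: cubeC_iff abs_hvec)

lemma tauA_hvec:
  assumes "A$i$i = 0"
  shows "tauA A i x = hvec (lambdaA A (i, True)) x"
  unfolding tauA_def hvec_def lambdaA_def vec_eq_iff sgn_bit_def
  using assms by (auto simp: mat_def)

text \<open>The sign changes commute with the pairing maps and hence preserve the facet pairing.\<close>
lemma hvec_glue_rel:
  assumes "(x, y) \<in> glue_rel A"
  shows "(hvec g x, hvec g y) \<in> glue_rel A"
proof -
  obtain i s where xy: "y = tauA A i x" "x \<in> facetC i s"
    using assms unfolding glue_rel_def by blast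
  have "hvec g x \<in> facetC i (s = (g$i \<noteq> 1))"
    using xy(2) hvec_cubeC[of x g] unfolding facetC_def hvec_def by auto
  moreover have "hvec g (tauA A i x) = tauA A i (hvec g x)"
    unfolding tauA_def hvec_def vec_eq_iff by auto
  ultimately show ?thesis
    using xy(1) unfolding glue_rel_def by blast
qed

text \<open>Every point of the cube is h_g p for its vector of absolute values p and its sign
  pattern g.\<close>
definition absv :: "real^'n \<Rightarrow> real^'n" where
  "absv x = (\<chi> k. \<bar>x$k\<bar>)"

definition sv :: "real^'n \<Rightarrow> bit^'n" where
  "sv x = (\<chi> k. if x$k < 0 then 1 else 0)"

definition unfold_pt :: "(real^'n) \<times> (bit^'n) \<Rightarrow> real^'n" where
  "unfold_pt pg = hvec (snd pg) (fst pg)"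

lemma hvec_unfold_pt: "hvec g (unfold_pt (p, g0)) = unfold_pt (p, g0 + g)"
  unfolding unfold_pt_def by (simp add: hvec_comp)

lemma unfold_pt_absv_sv: "unfold_pt (absv x, sv x) = x"
  unfolding unfold_pt_def hvec_def sv_def absv_def vec_eq_iff by auto

lemma absv_cube0: "x \<in> cubeC \<Longrightarrow> absv x \<in> cube0"
  unfolding cubeC_iff cube0_def absv_def by simp

lemma unfold_pt_cubeC: "p \<in> cube0 \<Longrightarrow> unfold_pt (p, g) \<in> cubeC"
  unfolding cubeC_iff cube0_def unfold_pt_def hvec_def by simp

lemma absv_unfold_pt: "p \<in> cube0 \<Longrightarrow> absv (unfold_pt (p, g)) = p"
  unfolding cube0_def unfold_pt_def hvec_def absv_def vec_eq_iff by auto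

lemma unfold_pt_image: "unfold_pt ` (cube0 \<times> UNIV) = cubeC"
proof
  show "unfold_pt ` (cube0 \<times> UNIV) \<subseteq> cubeC"
    using unfold_pt_cubeC by auto
  show "cubeC \<subseteq> unfold_pt ` (cube0 \<times> UNIV)"
  proof
    fix x assume "x \<in> cubeC"
    then have "(absv x, sv x) \<in> cube0 \<times> UNIV"
      by (simp add: absv_cube0)
    then show "x \<in> unfold_pt ` (cube0 \<times> UNIV)"
      using unfold_pt_absv_sv[of x] by (metis image_eqI)
  qed
qed

lemma compact_cube0: "compact (cube0 :: (real^'n) set)"
proof -
  have "cube0 = {(0::real^'n) .. (\<chi> i. 1/4)}"
    unfolding cube0_def by (auto simp: less_eq_vec_def atLeastAtMost_iff)
  then have "cube0 = cbox (0::real^'n) (\<chi> i. 1/4)"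
    by (simp add: interval_cbox_cart)
  then show ?thesis
    using compact_cbox by metis
qed

lemma continuous_unfold_pt:
  "continuous_map (prod_topology (top_of_set cube0) (discrete_topology UNIV)) euclidean
     (unfold_pt :: (real^'n) \<times> (bit^'n) \<Rightarrow> real^'n)"
proof -
  let ?X = "prod_topology (top_of_set (cube0 :: (real^'n) set)) (discrete_topology (UNIV :: (bit^'n) set))"
  have eq: "unfold_pt = (\<lambda>x. \<chi> k. sgn_bit (snd x $ k) * (fst x $ k))"
    unfolding unfold_pt_def hvec_def sgn_bit_def by (auto simp: fun_eq_iff)
  have sign: "continuous_map ?X euclideanreal (\<lambda>x. sgn_bit (snd x $ k))" for k
  proof -
    have "continuous_map (discrete_topology UNIV) euclideanreal (\<lambda>g. sgn_bit (g $ k))"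
      by simp
    from continuous_map_compose[OF continuous_map_snd this] show ?thesis
      by (simp add: o_def)
  qed
  have coord: "continuous_map ?X euclideanreal (\<lambda>x. fst x $ k)" for k
  proof -
    have "continuous_map (top_of_set cube0) euclideanreal (\<lambda>p. p $ k)"
      by (simp add: continuous_on_component continuous_on_id)
    from continuous_map_compose[OF continuous_map_fst this] show ?thesis
      by (simp add: o_def)
  qed
  show ?thesis
    unfolding eq by (intro continuous_map_vec_lambda continuous_map_real_mult sign coord)
qed

lemma quotient_map_unfold_pt:
  "quotient_map (prod_topology (top_of_set cube0) (discrete_topology UNIV)) (top_of_set cubeC) unfold_pt"
proof (rule continuous_imp_quotient_map)
  show "continuous_map (prod_topology (top_of_set cube0) (discrete_topology UNIV)) (top_of_set cubeC) unfold_pt"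
    using continuous_unfold_pt unfold_pt_image by (auto simp: continuous_map_in_subtopology)
  show "compact_space (prod_topology (top_of_set (cube0 :: (real^'n) set))
      (discrete_topology (UNIV :: (bit^'n) set)))"
    by (simp add: compact_space_prod_topology compact_space_discrete_topology
        compact_space_subtopology compact_cube0 finite_bitvec)
qed (auto simp: unfold_pt_image Hausdorff_space_subtopology)

section \<open>The identifications in Q^n_{F_A}\<close>

abbreviation G_at :: "bit^'n^'n \<Rightarrow> real^'n \<Rightarrow> (bit^'n) set" where
  "G_at A p \<equiv> G_face facet0 (lambdaA A) (face_of_pt cube0 facet0 p)"

abbreviation M_rel :: "bit^'n^'n \<Rightarrow> (((real^'n) \<times> (bit^'n)) \<times> ((real^'n) \<times> (bit^'n))) set" where
  "M_rel A \<equiv> glue_rel_M cube0 facet0 (lambdaA A)"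

abbreviation Q_rel :: "bit^'n^'n \<Rightarrow> ((real^'n) \<times> (real^'n)) set" where
  "Q_rel A \<equiv> gen_equiv cubeC (glue_rel A)"

lemma M_rel_iff: "((p, g), (p', g')) \<in> M_rel A \<longleftrightarrow> p \<in> cube0 \<and> p = p' \<and> g - g' \<in> G_at A p"
  unfolding glue_rel_M_def by auto

lemma lambdaA_in_G_at: "p \<in> facet0 F \<Longrightarrow> lambdaA A F \<in> G_at A p"
  unfolding G_face_def face_of_pt_def by (rule gen_base) blast

text \<open>For a zero diagonal the pairing maps preserve the cube, so the identification is an
  equivalence relation on C^n.\<close>
lemma Q_rel_equiv:
  assumes "\<forall>i. A$i$i = 0"
  shows "equiv cubeC (Q_rel A)"
proof (rule gen_equiv_equiv)
  show "glue_rel A \<subseteq> cubeC \<times> cubeC"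
    using assms hvec_cubeC unfolding glue_rel_def facetC_def by (auto simp: tauA_hvec)
qed

text \<open>Two sign changes of p agree exactly on the coordinates where p vanishes; the
  corresponding unit vectors are lambda_A-values of the facets bar F_k through p.\<close>
lemma unfold_pt_eq_imp_M_rel:
  assumes p: "p \<in> cube0" and p': "p' \<in> cube0" and eq: "unfold_pt (p, g) = unfold_pt (p', g')"
  shows "((p, g), (p', g')) \<in> M_rel A"
proof -
  have pp': "p = p'"
    using absv_unfold_pt[OF p, of g] absv_unfold_pt[OF p', of g'] eq by simp
  have "axis k 1 \<in> G_at A p" if k: "(g - g')$k = 1" for k
  proof -
    have "g$k \<noteq> g'$k"
      using k by auto
    moreover have "hvec g p $ k = hvec g' p $ k"
      using eq pp' unfolding unfold_pt_def by simp
    ultimately have "p$k = 0"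
      unfolding hvec_def using bit_0_or_1[of "g$k"] bit_0_or_1[of "g'$k"] by auto
    then have "p \<in> facet0 (k, False)"
      using p unfolding facet0_def by auto
    from lambdaA_in_G_at[OF this, of A] show ?thesis
      by (simp add: lambdaA_def)
  qed
  then have "(\<Sum>k\<in>{k. (g - g')$k = 1}. axis k 1) \<in> G_at A p"
    unfolding G_face_def by (intro gen_subgroup_sum) auto
  moreover have "(\<Sum>k\<in>{k. (g - g')$k = 1}. axis k 1) = g - g'"
    using bit_0_or_1 by (auto simp: vec_eq_iff sum_component axis_def)
  ultimately show ?thesis
    using p pp' by (simp add: M_rel_iff)
qed

lemma Q_rel_imp_M_rel:
  fixes A :: "bit^'n^'n"
  assumes d: "\<forall>i. A$i$i = 0" and xy: "(x, y) \<in> Q_rel A"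
  shows "((absv x, sv x), (absv y, sv y)) \<in> M_rel A"
proof -
  let ?S = "{(x, y). x \<in> cubeC \<and> y \<in> cubeC \<and> ((absv x, sv x), (absv y, sv y)) \<in> M_rel A}"
  have S: "equiv cubeC ?S"
    by (rule equiv_pullback[OF glue_rel_M_equiv]) (auto simp: absv_cube0)
  have "(x, tauA A i x) \<in> ?S" if x: "x \<in> facetC i s" for x i s
  proof -
    let ?l = "lambdaA A (i, True)" and ?y = "tauA A i x"
    have cx: "x \<in> cubeC" and ax: "absv x \<in> facet0 (i, True)"
      using x absv_cube0[of x] unfolding facetC_def facet0_def absv_def by (auto split: if_splits)
    have cy: "?y \<in> cubeC"
      using cx d by (simp add: tauA_hvec hvec_cubeC)
    have "?y = hvec ?l (unfold_pt (absv x, sv x))"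
      using d by (simp add: tauA_hvec unfold_pt_absv_sv)
    also have "\<dots> = unfold_pt (absv x, sv x + ?l)"
      by (rule hvec_unfold_pt)
    finally have "unfold_pt (absv x, sv x + ?l) = unfold_pt (absv ?y, sv ?y)"
      by (simp add: unfold_pt_absv_sv)
    from unfold_pt_eq_imp_M_rel[OF absv_cube0[OF cx] absv_cube0[OF cy] this]
    have "((absv x, sv x + ?l), (absv ?y, sv ?y)) \<in> M_rel A" .
    moreover have "((absv x, sv x), (absv x, sv x + ?l)) \<in> M_rel A"
      using gen_neg[OF lambdaA_in_G_at[OF ax, unfolded G_face_def]] absv_cube0[OF cx]
      by (simp add: M_rel_iff G_face_def)
    ultimately have "((absv x, sv x), (absv ?y, sv ?y)) \<in> M_rel A"
      using glue_rel_M_equiv by (blast elim: equivE transE)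
    then show "(x, ?y) \<in> ?S"
      using cx cy by blast
  qed
  then have "glue_rel A \<subseteq> ?S"
    unfolding glue_rel_def by blast
  then show ?thesis
    using gen_equiv_least[OF S] xy by blast
qed


text \<open>Conversely, changing the sign pattern of p by an element of G_{f(p)} does not change
  the point of Q^n_{F_A}: the generators either act trivially (facets bar F_j, where the
  coordinate vanishes) or are realised by the pairing maps (facets bar F^*_j).\<close>
lemma G_at_imp_Q_rel:
  fixes A :: "bit^'n^'n"
  assumes d: "\<forall>i. A$i$i = 0" and p: "p \<in> cube0" and h: "h \<in> G_at A p"
  shows "(unfold_pt (p, g), unfold_pt (p, g + h)) \<in> Q_rel A"
  using h[unfolded G_face_def]
proof (induction arbitrary: g rule: gen_subgroup.induct)
  case gen_zero
  show ?case
    using unfold_pt_cubeC[OF p] unfolding gen_equiv_def by (auto intro: Id_onI)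
next
  case (gen_base h)
  then obtain F where "h = lambdaA A F" and "face_of_pt cube0 facet0 p \<subseteq> facet0 F"
    by blast
  moreover obtain j b where "F = (j, b)"
    by (cases F)
  ultimately have h: "h = lambdaA A (j, b)" and pF: "p \<in> facet0 (j, b)"
    using in_face_of_pt[OF p] by auto
  show ?case
  proof (cases b)
    case False
    then have "p$j = 0" and "h = axis j 1"
      using pF h unfolding facet0_def lambdaA_def by auto
    then have "unfold_pt (p, g + h) = unfold_pt (p, g)"
      unfolding unfold_pt_def hvec_def vec_eq_iff by (auto simp: axis_def)
    then show ?thesis
      using unfold_pt_cubeC[OF p] unfolding gen_equiv_def by (auto intro: Id_onI)
  next
    case True
    let ?x = "unfold_pt (p, g)"
    have "?x \<in> facetC j (g$j \<noteq> 1)"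
      using unfold_pt_cubeC[OF p] pF True
      unfolding facetC_def facet0_def unfold_pt_def hvec_def by auto
    then have "(?x, tauA A j ?x) \<in> glue_rel A"
      unfolding glue_rel_def by blast
    moreover have "tauA A j ?x = unfold_pt (p, g + h)"
      using d h True by (simp add: tauA_hvec hvec_unfold_pt)
    ultimately show ?thesis
      unfolding gen_equiv_def by auto
  qed
next
  case (gen_add a b)
  have "(unfold_pt (p, g), unfold_pt (p, g + a)) \<in> Q_rel A"
    by (rule gen_add.IH(1))
  moreover have "(unfold_pt (p, g + a), unfold_pt (p, g + a + b)) \<in> Q_rel A"
    by (rule gen_add.IH(2))
  ultimately have "(unfold_pt (p, g), unfold_pt (p, g + a + b)) \<in> Q_rel A"
    using Q_rel_equiv[OF d] unfolding equiv_def trans_def by blast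
  then show ?case
    by (simp add: add.assoc)
next
  case (gen_neg a)
  have "- a = a"
    by (simp add: vec_eq_iff)
  then show ?case
    using gen_neg.IH[of g] by (simp only:)
qed

lemma unfold_pt_Q_rel_iff:
  fixes A :: "bit^'n^'n"
  assumes d: "\<forall>i. A$i$i = 0" and a: "a \<in> cube0 \<times> UNIV" and b: "b \<in> cube0 \<times> UNIV"
  shows "(unfold_pt a, unfold_pt b) \<in> Q_rel A \<longleftrightarrow> (a, b) \<in> M_rel A"
proof
  assume "(unfold_pt a, unfold_pt b) \<in> Q_rel A"
  then have ab: "((absv (unfold_pt a), sv (unfold_pt a)), (absv (unfold_pt b), sv (unfold_pt b))) \<in> M_rel A"
    by (rule Q_rel_imp_M_rel[OF d])
  have canon: "(z, (absv (unfold_pt z), sv (unfold_pt z))) \<in> M_rel A"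
    if zC: "z \<in> cube0 \<times> UNIV" for z
  proof -
    obtain p g where z: "z = (p, g)" and p: "p \<in> cube0"
      using zC by (cases z) auto
    have "absv (unfold_pt z) \<in> cube0"
      using z p by (simp add: absv_cube0 unfold_pt_cubeC)
    moreover have "unfold_pt (p, g) = unfold_pt (absv (unfold_pt z), sv (unfold_pt z))"
      unfolding z by (rule unfold_pt_absv_sv[symmetric])
    ultimately show ?thesis
      unfolding z by (rule unfold_pt_eq_imp_M_rel[OF p])
  qed
  have "sym (M_rel A)" and "trans (M_rel A)"
    using glue_rel_M_equiv[of cube0 facet0 "lambdaA A"] by (simp_all add: equiv_def)
  then show "(a, b) \<in> M_rel A"
    using canon[OF a] ab symD[OF _ canon[OF b]] by (meson transD)
next
  assume "(a, b) \<in> M_rel A"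
  then obtain p g g' where ab: "a = (p, g)" "b = (p, g')" "p \<in> cube0" "g - g' \<in> G_at A p"
    unfolding glue_rel_M_def by auto
  have "g' - g \<in> G_at A p"
    using gen_neg[OF ab(4)[unfolded G_face_def]] by (simp add: G_face_def)
  from G_at_imp_Q_rel[OF d ab(3) this, of g] show "(unfold_pt a, unfold_pt b) \<in> Q_rel A"
    using ab by simp
qed

lemma hQ_Qclass: "hQ g (Qclass A x) = Qclass A (hvec g x)"
proof -
  have Q_rel: "(hvec g x, hvec g y) \<in> Q_rel A" if "(x, y) \<in> Q_rel A" for x y
    by (rule gen_equiv_map[OF _ _ that]) (auto simp: hvec_cubeC hvec_glue_rel)
  show ?thesis
    unfolding hQ_def Qclass_def by (rule image_equiv_class[OF Q_rel Q_rel]) (simp_all add: hvec_invol)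
qed

lemma same_fibres:
  fixes A :: "bit^'n^'n"
  assumes d: "\<forall>i. A$i$i = 0" and ab: "a \<in> cube0 \<times> UNIV" "b \<in> cube0 \<times> UNIV"
  shows "Qclass A (unfold_pt a) = Qclass A (unfold_pt b) \<longleftrightarrow>
    Mclass cube0 facet0 (lambdaA A) a = Mclass cube0 facet0 (lambdaA A) b"
proof -
  have "unfold_pt a \<in> cubeC" "unfold_pt b \<in> cubeC"
    using ab unfold_pt_cubeC by auto
  then have "Qclass A (unfold_pt a) = Qclass A (unfold_pt b) \<longleftrightarrow> (unfold_pt a, unfold_pt b) \<in> Q_rel A"
    unfolding Qclass_def by (rule eq_equiv_class_iff[OF Q_rel_equiv[OF d]])
  also have "\<dots> \<longleftrightarrow> (a, b) \<in> M_rel A"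
    by (rule unfold_pt_Q_rel_iff[OF d ab])
  also have "\<dots> \<longleftrightarrow> Mclass cube0 facet0 (lambdaA A) a = Mclass cube0 facet0 (lambdaA A) b"
    unfolding Mclass_def by (rule eq_equiv_class_iff[OF glue_rel_M_equiv ab, symmetric])
  finally show ?thesis .
qed

theorem mainTheorem14:
  fixes A :: "bit^'n^'n"
  assumes "\<forall>i. A$i$i = 0"
  shows "\<exists>f. homeomorphic_map (QF A) (glueM cube0 facet0 (lambdaA A)) f \<and>
    (\<forall>g c. c \<in> topspace (QF A) \<longrightarrow> f (hQ g c) = glue_act g (f c))"
proof -
  let ?X = "prod_topology (top_of_set (cube0 :: (real^'n) set)) (discrete_topology (UNIV :: (bit^'n) set))"
  let ?q = "Qclass A \<circ> unfold_pt" and ?M = "Mclass cube0 facet0 (lambdaA A)"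
  have q: "quotient_map ?X (QF A) ?q"
    unfolding QF_def by (rule quotient_map_compose[OF quotient_map_unfold_pt quotient_map_quot_top])
  have M: "quotient_map ?X (glueM cube0 facet0 (lambdaA A)) ?M"
    unfolding glueM_def by (rule quotient_map_quot_top)
  have "?q a = ?q b \<longleftrightarrow> ?M a = ?M b" if "a \<in> topspace ?X" "b \<in> topspace ?X" for a b
    unfolding o_def by (rule same_fibres[OF assms]) (use that in auto)
  then obtain k where k: "homeomorphic_map (QF A) (glueM cube0 facet0 (lambdaA A)) k"
    "\<And>a. a \<in> topspace ?X \<Longrightarrow> k (?q a) = ?M a"
    using quotient_maps_same_fibres[OF q M] by blast
  have "k (hQ g c) = glue_act g (k c)" if "c \<in> topspace (QF A)" for g c
  proof -
    have "c \<in> ?q ` (cube0 \<times> UNIV)"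
      using that quotient_imp_surjective_map[OF q] by simp
    then obtain p g0 where p: "p \<in> cube0" and c: "c = ?q (p, g0)"
      by blast
    have "hQ g c = ?q (p, g0 + g)"
      using c by (simp add: hQ_Qclass hvec_unfold_pt)
    then show ?thesis
      using k(2) p c by (simp add: glue_act_Mclass)
  qed
  then show ?thesis
    using k(1) by blast
qed

end
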